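(* Let $(K_d)_{d\in\mathbb N}$ be a sequence of measurable sets $K_d\subseteq\mathbb R^d$ with $\mathrm{vol}_d(K_d)=1$, center of mass at the origin, and star-shaped with respect to the origin. Let $(B_d)_{d\in\mathbb N}$ be positive numbers with \[ \lim_{d\to\infty}B_d\cdot I_2(K_d)=0. \] Then \[ \lim_{d\to\infty}\sup_f\left|\int_{K_d}f(x)\,dx-f(0)\right|=0, \] where the supremum is taken over all $f\in\{f\in\mathscr C^1(K_d):\mathrm{Lip}(D^\theta f)\le B_d\text{ for all }\theta\in\mathbb S^{d-1}\}$.
   Context: $I_q(K)=\int_K\|x\|_2^q\,dx$ for measurable $K\subseteq\mathbb R^d$ and $q\ge0$. Center of mass at the origin means $\int_{K_d}x\,dx=0$. A set is star-shaped with respect to the origin if for each $x$ in it the segment from $0$ to $x$ lies in it. For $g$ on $K_d$, $\mathrm{Lip}(g)=\sup_{x\ne y\in K_d}|g(x)-g(y)|/\|x-y\|_2$; $D^\theta$ is the directional derivative in direction $\theta$. *)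

theory Defs
  imports "HOL-Analysis.Analysis"
begin

text \<open>Euclidean space R^d is encoded as the extensional functions on the index set
  {..<d}, i.e. the space of the product measure below.\<close>

definition Rd :: "nat \<Rightarrow> (nat \<Rightarrow> real) set" where
  "Rd d = PiE {..<d} (\<lambda>_. UNIV)"

definition lebd :: "nat \<Rightarrow> (nat \<Rightarrow> real) measure" where
  "lebd d = completion (PiM {..<d} (\<lambda>_. lborel))"

definition origin :: "nat \<Rightarrow> nat \<Rightarrow> real" where
  "origin d = (\<lambda>i\<in>{..<d}. 0)"

definition enorm :: "nat \<Rightarrow> (nat \<Rightarrow> real) \<Rightarrow> real" where
  "enorm d x = sqrt (\<Sum>i<d. (x i)\<^sup>2)"

definition unit_sphere :: "nat \<Rightarrow> (nat \<Rightarrow> real) set" where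
  "unit_sphere d = {\<theta> \<in> Rd d. enorm d \<theta> = 1}"

definition Iq :: "nat \<Rightarrow> real \<Rightarrow> (nat \<Rightarrow> real) set \<Rightarrow> ennreal" where
  "Iq d q K = set_nn_integral (lebd d) K (\<lambda>x. ennreal (enorm d x powr q))"

definition center_of_mass_origin :: "nat \<Rightarrow> (nat \<Rightarrow> real) set \<Rightarrow> bool" where
  "center_of_mass_origin d K \<longleftrightarrow>
     (\<forall>j<d. set_integrable (lebd d) K (\<lambda>x. x j) \<and> (LINT x:K|lebd d. x j) = 0)"

definition star_shaped_origin :: "nat \<Rightarrow> (nat \<Rightarrow> real) set \<Rightarrow> bool" where
  "star_shaped_origin d K \<longleftrightarrow>
     (\<forall>x\<in>K. \<forall>t\<in>{0..1::real}. (\<lambda>i\<in>{..<d}. t * x i) \<in> K)"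

definition dir_deriv :: "nat \<Rightarrow> (nat \<Rightarrow> real) \<Rightarrow> ((nat \<Rightarrow> real) \<Rightarrow> real) \<Rightarrow> (nat \<Rightarrow> real) \<Rightarrow> real" where
  "dir_deriv d \<theta> f x = deriv (\<lambda>t. f (\<lambda>i\<in>{..<d}. x i + t * \<theta> i)) 0"

definition C1_on :: "nat \<Rightarrow> (nat \<Rightarrow> real) set \<Rightarrow> ((nat \<Rightarrow> real) \<Rightarrow> real) \<Rightarrow> bool" where
  "C1_on d K f \<longleftrightarrow> (\<exists>g :: (nat \<Rightarrow> real) \<Rightarrow> nat \<Rightarrow> real.
     (\<forall>x\<in>K. ((\<lambda>y. (f y - f x - (\<Sum>i<d. g x i * (y i - x i))) / enorm d (\<lambda>i. y i - x i))
                \<longlongrightarrow> 0) (at x within Rd d)) \<and>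
     (\<forall>i<d. continuous_on K (\<lambda>x. g x i)))"

definition lip_le :: "nat \<Rightarrow> (nat \<Rightarrow> real) set \<Rightarrow> ((nat \<Rightarrow> real) \<Rightarrow> real) \<Rightarrow> real \<Rightarrow> bool" where
  "lip_le d K g B \<longleftrightarrow> (\<forall>x\<in>K. \<forall>y\<in>K. x \<noteq> y \<longrightarrow> \<bar>g x - g y\<bar> / enorm d (\<lambda>i. x i - y i) \<le> B)"

definition test_class :: "nat \<Rightarrow> (nat \<Rightarrow> real) set \<Rightarrow> real \<Rightarrow> ((nat \<Rightarrow> real) \<Rightarrow> real) set" where
  "test_class d K B = {f. C1_on d K f \<and> (\<forall>\<theta>\<in>unit_sphere d. lip_le d K (dir_deriv d \<theta> f) B)}"

end

theory Submission
  imports Defs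
begin

text \<open>For f in the test class, the Lipschitz bound on every directional derivative bounds the
  variation of the gradient, so the mean value theorem along the segment from 0 to x (which lies
  in K by star-shapedness) gives the second-order Taylor estimate
  |f x - f 0 - <grad f 0, x>| \<le> B |x|^2.
  Integrating over K, volume 1 leaves f 0 and the center of mass at the origin kills the linear
  term, so |\<integral>_K f - f 0| \<le> B I_2(K) uniformly over the class; the zero function
  shows that the supremum is nonnegative.\<close>

lemma enorm_nonneg: "0 \<le> enorm d x"
  unfolding enorm_def by (simp add: sum_nonneg)

lemma enorm_cong: "(\<And>i. i < d \<Longrightarrow> x i = y i) \<Longrightarrow> enorm d x = enorm d y"
  unfolding enorm_def by (intro arg_cong[where f=sqrt] sum.cong) auto

lemma enorm_mult: "enorm d (\<lambda>i. c * x i) = \<bar>c\<bar> * enorm d x"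
proof -
  have "(\<Sum>i<d. (c * x i)\<^sup>2) = c\<^sup>2 * (\<Sum>i<d. (x i)\<^sup>2)"
    by (simp add: sum_distrib_left power_mult_distrib)
  then show ?thesis unfolding enorm_def by (simp add: real_sqrt_mult)
qed

lemma power2_enorm: "(enorm d x)\<^sup>2 = (\<Sum>i<d. (x i)\<^sup>2)"
  unfolding enorm_def by (simp add: sum_nonneg)

lemma enorm_eq_0_iff: "enorm d x = 0 \<longleftrightarrow> (\<forall>i<d. x i = 0)"
  unfolding enorm_def by (auto simp: sum_nonneg_eq_0_iff sum_nonneg)

lemma enorm_pos_iff: "0 < enorm d x \<longleftrightarrow> (\<exists>i<d. x i \<noteq> 0)"
  using enorm_nonneg[of d x] enorm_eq_0_iff[of d x] by (auto simp: less_le)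

lemma enorm_diff_pos:
  assumes "x \<in> Rd d" "y \<in> Rd d" "x \<noteq> y"
  shows "0 < enorm d (\<lambda>i. x i - y i)"
proof -
  have "\<exists>i<d. x i \<noteq> y i"
    using assms unfolding Rd_def by (metis PiE_ext lessThan_iff)
  then show ?thesis by (simp add: enorm_pos_iff)
qed

lemma tendsto_coordinate: "((\<lambda>y::nat \<Rightarrow> real. y i) \<longlongrightarrow> x i) (at x within S)"
proof -
  have "continuous_on UNIV (\<lambda>y::nat \<Rightarrow> real. y i)" by simp
  then show ?thesis by (auto simp: continuous_on_def intro: tendsto_within_subset)
qed

lemma tendsto_enorm_diff: "((\<lambda>y. enorm d (\<lambda>i. y i - x i)) \<longlongrightarrow> 0) (at x within S)"
proof -
  have "((\<lambda>y. sqrt (\<Sum>i<d. (y i - x i)\<^sup>2)) \<longlongrightarrow> sqrt (\<Sum>i<d. (x i - x i)\<^sup>2)) (at x within S)"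
    by (intro tendsto_intros tendsto_coordinate)
  then show ?thesis unfolding enorm_def by simp
qed

definition has_gradient ::
    "nat \<Rightarrow> ((nat \<Rightarrow> real) \<Rightarrow> real) \<Rightarrow> (nat \<Rightarrow> real) \<Rightarrow> (nat \<Rightarrow> real) \<Rightarrow> bool" where
  "has_gradient d f G x \<longleftrightarrow>
     ((\<lambda>y. (f y - f x - (\<Sum>i<d. G i * (y i - x i))) / enorm d (\<lambda>i. y i - x i)) \<longlongrightarrow> 0)
       (at x within Rd d)"

lemma C1_on_imp_has_gradient: "C1_on d K f \<Longrightarrow> \<exists>g. \<forall>x\<in>K. has_gradient d f (g x) x"
  unfolding C1_on_def has_gradient_def by blast

lemma has_gradient_imp_tendsto:
  assumes grad: "has_gradient d f G x" and x: "x \<in> Rd d"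
  shows "(f \<longlongrightarrow> f x) (at x within Rd d)"
proof -
  define R where "R y = (f y - f x - (\<Sum>i<d. G i * (y i - x i))) / enorm d (\<lambda>i. y i - x i)" for y
  have "\<forall>\<^sub>F y in at x within Rd d. f x + (\<Sum>i<d. G i * (y i - x i)) + R y * enorm d (\<lambda>i. y i - x i) = f y"
    unfolding eventually_at_filter R_def
    using enorm_diff_pos[OF _ x] by (intro always_eventually) (simp add: less_le)
  moreover have "((\<lambda>y. f x + (\<Sum>i<d. G i * (y i - x i)) + R y * enorm d (\<lambda>i. y i - x i)) \<longlongrightarrow>
      f x + (\<Sum>i<d. G i * (x i - x i)) + 0 * 0) (at x within Rd d)"
    using grad unfolding has_gradient_def R_def[symmetric]
    by (intro tendsto_intros tendsto_coordinate tendsto_enorm_diff)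
  ultimately show ?thesis
    by (simp add: Lim_transform_eventually)
qed

definition line :: "nat \<Rightarrow> (nat \<Rightarrow> real) \<Rightarrow> (nat \<Rightarrow> real) \<Rightarrow> real \<Rightarrow> nat \<Rightarrow> real" where
  "line d a v t = (\<lambda>i\<in>{..<d}. a i + t * v i)"

lemma line_in_Rd: "line d a v t \<in> Rd d"
  unfolding line_def Rd_def by auto

lemma line_0: "a \<in> Rd d \<Longrightarrow> line d a v 0 = a"
  unfolding line_def Rd_def by (auto simp: PiE_def extensional_def)

lemma line_diff: "i < d \<Longrightarrow> line d a v t i - line d a v s i = (t - s) * v i"
  unfolding line_def by (simp add: algebra_simps)

lemma enorm_line_diff: "enorm d (\<lambda>i. line d a v t i - line d a v s i) = \<bar>t - s\<bar> * enorm d v"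
  by (simp add: enorm_cong[of d _ "\<lambda>i. (t - s) * v i"] line_diff enorm_mult)

lemma tendsto_line: "(line d a v \<longlongrightarrow> line d a v t0) (at t0)"
proof -
  have "continuous_on UNIV (\<lambda>t. line d a v t i)" for i
    unfolding line_def by (cases "i < d") (simp_all add: continuous_on_add continuous_on_mult_right)
  then have "continuous_on UNIV (line d a v)"
    by (rule continuous_on_coordinatewise_then_product)
  then show ?thesis by (simp add: continuous_on_def)
qed

lemma filterlim_line:
  assumes "j < d" "v j \<noteq> 0"
  shows "filterlim (line d a v) (at (line d a v t0) within Rd d) (at t0)"
  unfolding filterlim_at
proof
  have "line d a v t \<noteq> line d a v t0" if "t \<noteq> t0" for t
    using line_diff[OF assms(1), of a v t t0] assms that by auto
  then show "\<forall>\<^sub>F t in at t0. line d a v t \<in> Rd d \<and> line d a v t \<noteq> line d a v t0"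
    unfolding eventually_at_filter by (simp add: line_in_Rd)
qed (rule tendsto_line)

lemma has_gradient_imp_has_real_derivative_line:
  assumes grad: "has_gradient d f G (line d a v t0)"
  shows "((\<lambda>t. f (line d a v t)) has_real_derivative (\<Sum>i<d. G i * v i)) (at t0)"
proof (cases "\<forall>i<d. v i = 0")
  case True
  then have "line d a v t = line d a v t0" for t
    unfolding line_def by (intro restrict_ext) simp
  then have "(\<lambda>t. f (line d a v t)) = (\<lambda>_. f (line d a v t0))" by metis
  then show ?thesis using True by simp
next
  case False
  then obtain j where j: "j < d" "v j \<noteq> 0" by blast
  define p where "p = line d a v t0"
  define L where "L = (\<Sum>i<d. G i * v i)"
  define R where "R y = (f y - f p - (\<Sum>i<d. G i * (y i - p i))) / enorm d (\<lambda>i. y i - p i)" for y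
  have E: "0 < enorm d v" using j by (auto simp: enorm_pos_iff)
  have "((\<lambda>t. R (line d a v t)) \<longlongrightarrow> 0) (at t0)"
    using filterlim_compose[OF grad[unfolded has_gradient_def] filterlim_line[of j d v a t0]] j
    by (simp add: R_def p_def)
  then have bound_tendsto: "((\<lambda>t. enorm d v * \<bar>R (line d a v t)\<bar>) \<longlongrightarrow> 0) (at t0)"
    by (intro tendsto_mult_right_zero tendsto_rabs_zero)
  have quotient_eq: "\<bar>(f (line d a v t) - f p) / (t - t0) - L\<bar> = enorm d v * \<bar>R (line d a v t)\<bar>"
    if "t \<noteq> t0" for t
  proof -
    define N where "N = f (line d a v t) - f p - (t - t0) * L"
    have "(\<Sum>i<d. G i * (line d a v t i - p i)) = (t - t0) * L"
      unfolding p_def L_def by (simp add: line_diff sum_distrib_left algebra_simps)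
    then have "R (line d a v t) = N / (\<bar>t - t0\<bar> * enorm d v)"
      unfolding R_def N_def p_def enorm_line_diff by simp
    moreover have "(f (line d a v t) - f p) / (t - t0) - L = N / (t - t0)"
      using that unfolding N_def by (simp add: field_simps)
    ultimately show ?thesis
      using E by (simp add: abs_divide)
  qed
  have "((\<lambda>t. (f (line d a v t) - f p) / (t - t0) - L) \<longlongrightarrow> 0) (at t0)"
    by (rule Lim_null_comparison[OF _ bound_tendsto])
      (simp add: eventually_at_filter quotient_eq)
  then have "((\<lambda>t. (f (line d a v t) - f p) / (t - t0)) \<longlongrightarrow> L) (at t0)"
    by (rule LIM_zero_cancel)
  then show ?thesis
    unfolding has_field_derivative_iff p_def L_def .
qed

lemma dir_deriv_eq_gradient:
  assumes "has_gradient d f G x" "x \<in> Rd d"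
  shows "dir_deriv d \<theta> f x = (\<Sum>i<d. G i * \<theta> i)"
proof -
  have "dir_deriv d \<theta> f x = deriv (\<lambda>t. f (line d x \<theta> t)) 0"
    unfolding dir_deriv_def line_def ..
  also have "\<dots> = (\<Sum>i<d. G i * \<theta> i)"
    using assms by (intro DERIV_imp_deriv has_gradient_imp_has_real_derivative_line) (simp add: line_0)
  finally show ?thesis .
qed

lemma gradient_diff_inner_le:
  assumes grad: "\<And>x. x \<in> K \<Longrightarrow> has_gradient d f (g x) x" and KR: "K \<subseteq> Rd d"
    and lip: "\<forall>\<theta>\<in>unit_sphere d. lip_le d K (dir_deriv d \<theta> f) B"
    and x: "x \<in> K" and y: "y \<in> K"
  shows "\<bar>\<Sum>i<d. (g x i - g y i) * w i\<bar> \<le> B * enorm d (\<lambda>i. x i - y i) * enorm d w"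
proof (cases "x = y \<or> enorm d w = 0")
  case True
  then have "(\<Sum>i<d. (g x i - g y i) * w i) = 0"
    "enorm d (\<lambda>i. x i - y i) = 0 \<or> enorm d w = 0"
    by (auto simp: enorm_eq_0_iff)
  then show ?thesis by auto
next
  case False
  define E where "E = enorm d w"
  have E: "0 < E" using False enorm_nonneg[of d w] unfolding E_def by linarith
  define \<theta> where "\<theta> = (\<lambda>i\<in>{..<d}. w i / E)"
  have "enorm d \<theta> = enorm d (\<lambda>i. (1 / E) * w i)"
    unfolding \<theta>_def by (rule enorm_cong) simp
  then have \<theta>: "\<theta> \<in> unit_sphere d"
    using E unfolding enorm_mult unit_sphere_def Rd_def \<theta>_def E_def by auto
  have xy: "0 < enorm d (\<lambda>i. x i - y i)"
    using False KR x y by (intro enorm_diff_pos) auto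
  have "dir_deriv d \<theta> f z = (\<Sum>i<d. g z i * w i) / E" if "z \<in> K" for z
    using dir_deriv_eq_gradient[OF grad[OF that]] that KR
    unfolding \<theta>_def by (auto simp: sum_divide_distrib)
  then have "dir_deriv d \<theta> f x - dir_deriv d \<theta> f y = (\<Sum>i<d. (g x i - g y i) * w i) / E"
    using x y by (simp add: diff_divide_distrib sum_subtractf left_diff_distrib)
  moreover have "\<bar>dir_deriv d \<theta> f x - dir_deriv d \<theta> f y\<bar> \<le> B * enorm d (\<lambda>i. x i - y i)"
    using lip \<theta> x y False xy unfolding lip_le_def by (auto simp: divide_le_eq)
  ultimately show ?thesis
    using E unfolding E_def by (simp add: abs_divide divide_le_eq mult.assoc)
qed

lemma star_shaped_line_in:
  assumes "star_shaped_origin d K" "x \<in> K" "0 \<le> t" "t \<le> 1"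
  shows "line d (\<lambda>_. 0) x t \<in> K"
  using assms unfolding star_shaped_origin_def line_def by auto

lemma quadratic_taylor_bound:
  assumes grad: "\<And>x. x \<in> K \<Longrightarrow> has_gradient d f (g x) x" and KR: "K \<subseteq> Rd d"
    and grad_lip: "\<And>x y w. x \<in> K \<Longrightarrow> y \<in> K \<Longrightarrow>
        \<bar>\<Sum>i<d. (g x i - g y i) * w i\<bar> \<le> B * enorm d (\<lambda>i. x i - y i) * enorm d w"
    and star: "star_shaped_origin d K" and B: "0 \<le> B" and x: "x \<in> K"
  shows "\<bar>f x - f (origin d) - (\<Sum>i<d. g (origin d) i * x i)\<bar> \<le> B * (enorm d x)\<^sup>2"
proof -
  let ?c = "line d (\<lambda>_. 0) x"
  define \<phi> where "\<phi> t = f (?c t) - t * (\<Sum>i<d. g (origin d) i * x i)" for t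
  have c0: "?c 0 = origin d" unfolding line_def origin_def by simp
  have c1: "?c 1 = x" using x KR unfolding line_def Rd_def by (auto simp: PiE_def extensional_restrict)
  have origin: "origin d \<in> K" using star_shaped_line_in[OF star x, of 0] by (simp add: c0)
  have "(\<phi> has_real_derivative (\<Sum>i<d. (g (?c t) i - g (origin d) i) * x i)) (at t)"
    if "0 \<le> t" "t \<le> 1" for t
    using has_gradient_imp_has_real_derivative_line[OF grad[OF star_shaped_line_in[OF star x that]]]
    unfolding \<phi>_def sum_subtractf left_diff_distrib
    by (intro DERIV_diff) (auto intro!: derivative_eq_intros)
  then obtain z where z: "0 < z" "z < 1"
    and mvt: "\<phi> 1 - \<phi> 0 = (\<Sum>i<d. (g (?c z) i - g (origin d) i) * x i)"
    using MVT2[OF zero_less_one, of \<phi> "\<lambda>t. \<Sum>i<d. (g (?c t) i - g (origin d) i) * x i"] by auto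
  have "f x - f (origin d) - (\<Sum>i<d. g (origin d) i * x i) = \<phi> 1 - \<phi> 0"
    unfolding \<phi>_def c0 c1 by simp
  also have "\<bar>\<dots>\<bar> \<le> B * enorm d (\<lambda>i. ?c z i - ?c 0 i) * enorm d x"
    unfolding mvt c0 using z by (intro grad_lip star_shaped_line_in[OF star x] origin) auto
  also have "\<dots> = B * z * (enorm d x)\<^sup>2"
    using z by (simp add: enorm_line_diff power2_eq_square)
  also have "\<dots> \<le> B * (enorm d x)\<^sup>2"
    using z B by (intro mult_right_mono mult_left_le) auto
  finally show ?thesis .
qed

lemma space_lebd: "space (lebd d) = Rd d"
  unfolding lebd_def Rd_def by (simp add: space_PiM)

lemma sets_lebd_subset_Rd: "K \<in> sets (lebd d) \<Longrightarrow> K \<subseteq> Rd d"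
  using sets.sets_into_space space_lebd by metis

lemma measurable_coordinate_lebd: "(\<lambda>x. x i) \<in> borel_measurable (lebd d)"
proof (cases "i < d")
  case True
  then have "(\<lambda>x. x i) \<in> borel_measurable (PiM {..<d} (\<lambda>_. lborel))"
    by (simp add: measurable_component_singleton)
  then show ?thesis unfolding lebd_def by (rule measurable_completion)
next
  case False
  then have "x i = undefined" if "x \<in> space (lebd d)" for x :: "nat \<Rightarrow> real"
    using that by (auto simp: space_lebd Rd_def PiE_def extensional_def)
  then show ?thesis
    using measurable_cong[of "lebd d" "\<lambda>x. x i" "\<lambda>_. undefined" borel] by simp
qed

lemma borel_measurable_restrict_lebd:
  assumes "continuous_on K f" "K \<in> sets (lebd d)"
  shows "(f :: (nat \<Rightarrow> real) \<Rightarrow> real) \<in> borel_measurable (restrict_space (lebd d) K)"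
proof -
  have "(\<lambda>x. x) \<in> borel_measurable (lebd d)"
    by (rule measurable_coordinatewise_then_product) (rule measurable_coordinate_lebd)
  then have "(\<lambda>x. x) \<in> measurable (restrict_space (lebd d) K) (restrict_space borel K)"
    by (rule measurable_restrict_space3) auto
  from measurable_comp[OF this borel_measurable_continuous_on_restrict[OF assms(1)]]
  show ?thesis by (simp add: comp_def)
qed

lemma second_moment_restrict_lebd:
  assumes K: "K \<in> sets (lebd d)" and fin: "Iq d 2 K \<noteq> \<infinity>"
  shows "integrable (restrict_space (lebd d) K) (\<lambda>x. (enorm d x)\<^sup>2)"
    and "(\<integral>x. (enorm d x)\<^sup>2 \<partial>restrict_space (lebd d) K) = enn2real (Iq d 2 K)"
proof -
  have [measurable]: "(\<lambda>x. (enorm d x)\<^sup>2) \<in> borel_measurable (restrict_space (lebd d) K)"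
    unfolding power2_enorm
    by (intro borel_measurable_sum borel_measurable_power measurable_restrict_space1
        measurable_coordinate_lebd)
  have KI: "K \<inter> space (lebd d) \<in> sets (lebd d)" using K by simp
  have nn: "(\<integral>\<^sup>+x. ennreal ((enorm d x)\<^sup>2) \<partial>restrict_space (lebd d) K) = Iq d 2 K"
    unfolding Iq_def nn_integral_restrict_space[OF KI] by (simp add: enorm_nonneg)
  then show "integrable (restrict_space (lebd d) K) (\<lambda>x. (enorm d x)\<^sup>2)"
    using fin by (intro integrableI_nn_integral_finite[where x="enn2real (Iq d 2 K)"])
      (auto simp: ennreal_enn2real_if)
  show "(\<integral>x. (enorm d x)\<^sup>2 \<partial>restrict_space (lebd d) K) = enn2real (Iq d 2 K)"
    using nn by (simp add: integral_eq_nn_integral)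
qed

lemma linear_integral_restrict_lebd:
  assumes K: "K \<in> sets (lebd d)" and com: "center_of_mass_origin d K"
  shows "integrable (restrict_space (lebd d) K) (\<lambda>x. \<Sum>i<d. a i * x i)"
    and "(\<integral>x. (\<Sum>i<d. a i * x i) \<partial>restrict_space (lebd d) K) = 0"
proof -
  have KI: "K \<inter> space (lebd d) \<in> sets (lebd d)" using K by simp
  have "integrable (restrict_space (lebd d) K) (\<lambda>x. x i)"
    and "(\<integral>x. x i \<partial>restrict_space (lebd d) K) = 0" if "i < d" for i
    using com that
    unfolding center_of_mass_origin_def set_integrable_def set_lebesgue_integral_def
    by (simp_all add: integrable_restrict_space[OF KI] integral_restrict_space[OF KI])
  then show "integrable (restrict_space (lebd d) K) (\<lambda>x. \<Sum>i<d. a i * x i)"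
    and "(\<integral>x. (\<Sum>i<d. a i * x i) \<partial>restrict_space (lebd d) K) = 0"
    by (auto intro!: Bochner_Integration.integrable_sum)
qed

lemma set_integral_deviation_le_second_moment:
  fixes f :: "(nat \<Rightarrow> real) \<Rightarrow> real"
  assumes K: "K \<in> sets (lebd d)" and vol: "emeasure (lebd d) K = 1"
    and com: "center_of_mass_origin d K" and fin: "Iq d 2 K \<noteq> \<infinity>"
    and cont: "continuous_on K f"
    and bound: "\<And>x. x \<in> K \<Longrightarrow> \<bar>f x - c - (\<Sum>i<d. a i * x i)\<bar> \<le> B * (enorm d x)\<^sup>2"
  shows "\<bar>(LINT x:K|lebd d. f x) - c\<bar> \<le> B * enn2real (Iq d 2 K)"
proof -
  let ?N = "restrict_space (lebd d) K"
  have KI: "K \<inter> space (lebd d) \<in> sets (lebd d)" using K by simp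
  have space_N: "space ?N = K" using K sets_lebd_subset_Rd by (simp add: space_lebd)
  have vol_N: "emeasure ?N (space ?N) = 1"
    using vol K by (simp add: space_N emeasure_restrict_space)
  interpret N: finite_measure ?N
    using vol_N by (intro finite_measureI) simp
  define h where "h x = f x - c - (\<Sum>i<d. a i * x i)" for x
  have h_bound: "\<bar>h x\<bar> \<le> B * (enorm d x)\<^sup>2" if "x \<in> space ?N" for x
    using bound that by (simp add: h_def space_N)
  have [measurable]: "f \<in> borel_measurable ?N"
    by (rule borel_measurable_restrict_lebd[OF cont K])
  have [measurable]: "(\<lambda>x. x i) \<in> borel_measurable ?N" for i
    by (intro measurable_restrict_space1 measurable_coordinate_lebd)
  have h_int: "integrable ?N h"
  proof (rule Bochner_Integration.integrable_bound)
    show "integrable ?N (\<lambda>x. B * (enorm d x)\<^sup>2)"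
      using second_moment_restrict_lebd(1)[OF K fin] by simp
    show "h \<in> borel_measurable ?N"
      unfolding h_def by measurable
    show "AE x in ?N. norm (h x) \<le> norm (B * (enorm d x)\<^sup>2)"
      using h_bound by (auto intro: order_trans[OF _ abs_ge_self])
  qed
  have "(LINT x:K|lebd d. f x) = (\<integral>x. h x + c + (\<Sum>i<d. a i * x i) \<partial>?N)"
    unfolding set_lebesgue_integral_def h_def by (simp add: integral_restrict_space[OF KI])
  also have "\<dots> = (\<integral>x. h x \<partial>?N) + c"
    using h_int linear_integral_restrict_lebd[OF K com, of a] vol_N by (simp add: measure_def)
  finally have "\<bar>(LINT x:K|lebd d. f x) - c\<bar> = \<bar>\<integral>x. h x \<partial>?N\<bar>" by simp
  also have "\<dots> \<le> (\<integral>x. B * (enorm d x)\<^sup>2 \<partial>?N)"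
    using h_bound h_int second_moment_restrict_lebd(1)[OF K fin]
    by (intro order_trans[OF integral_abs_bound] integral_mono) auto
  also have "\<dots> = B * enn2real (Iq d 2 K)"
    using second_moment_restrict_lebd(2)[OF K fin] by simp
  finally show ?thesis .
qed

lemma test_class_set_integral_deviation_le:
  assumes K: "K \<in> sets (lebd d)" and vol: "emeasure (lebd d) K = 1"
    and com: "center_of_mass_origin d K" and star: "star_shaped_origin d K"
    and B: "0 \<le> B" and fin: "Iq d 2 K \<noteq> \<infinity>" and f: "f \<in> test_class d K B"
  shows "\<bar>(LINT x:K|lebd d. f x) - f (origin d)\<bar> \<le> B * enn2real (Iq d 2 K)"
proof -
  have KR: "K \<subseteq> Rd d" using K by (rule sets_lebd_subset_Rd)
  obtain g where grad: "\<And>x. x \<in> K \<Longrightarrow> has_gradient d f (g x) x"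
    using f C1_on_imp_has_gradient unfolding test_class_def by blast
  have lip: "\<forall>\<theta>\<in>unit_sphere d. lip_le d K (dir_deriv d \<theta> f) B"
    using f unfolding test_class_def by blast
  have "continuous_on K f"
    unfolding continuous_on_def
    using grad KR by (blast intro: tendsto_within_subset has_gradient_imp_tendsto)
  moreover have "\<bar>f x - f (origin d) - (\<Sum>i<d. g (origin d) i * x i)\<bar> \<le> B * (enorm d x)\<^sup>2"
    if "x \<in> K" for x
    using quadratic_taylor_bound[OF grad KR gradient_diff_inner_le[OF grad KR lip] star B that] .
  ultimately show ?thesis
    by (rule set_integral_deviation_le_second_moment[OF K vol com fin])
qed

lemma zero_in_test_class: "0 \<le> B \<Longrightarrow> (\<lambda>_. 0) \<in> test_class d K B"
  unfolding test_class_def C1_on_def lip_le_def dir_deriv_def by (auto intro!: exI[of _ "\<lambda>x i. 0"])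

theorem proposition5p2:
  fixes K :: "nat \<Rightarrow> (nat \<Rightarrow> real) set" and B :: "nat \<Rightarrow> real"
  assumes meas: "\<And>d. K d \<in> sets (lebd d)"
    and vol: "\<And>d. emeasure (lebd d) (K d) = 1"
    and com: "\<And>d. center_of_mass_origin d (K d)"
    and star: "\<And>d. star_shaped_origin d (K d)"
    and Bpos: "\<And>d. B d > 0"
    and lim: "(\<lambda>d. ennreal (B d) * Iq d 2 (K d)) \<longlonglongrightarrow> 0"
  shows "(\<lambda>d. SUP f \<in> test_class d (K d) (B d).
            ereal \<bar>(LINT x:K d|lebd d. f x) - f (origin d)\<bar>) \<longlonglongrightarrow> 0"
proof (rule tendsto_sandwich[OF _ _ tendsto_const])
  have B: "0 \<le> B d" for d using Bpos[of d] by simp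
  have "(\<lambda>d. enn2real (ennreal (B d) * Iq d 2 (K d))) \<longlonglongrightarrow> 0"
    using lim by (intro tendsto_enn2real) simp_all
  then show "(\<lambda>d. ereal (B d * enn2real (Iq d 2 (K d)))) \<longlonglongrightarrow> 0"
    using B by (simp add: enn2real_mult zero_ereal_def)
  have "\<forall>\<^sub>F d in sequentially. ennreal (B d) * Iq d 2 (K d) < 1"
    using lim by (rule order_tendstoD) simp
  then have "\<forall>\<^sub>F d in sequentially. Iq d 2 (K d) \<noteq> \<infinity>"
    by eventually_elim (metis Bpos ennreal_eq_0_iff ennreal_mult_top infinity_ennreal_def
        not_le not_top_less)
  then show "\<forall>\<^sub>F d in sequentially. (SUP f \<in> test_class d (K d) (B d).
      ereal \<bar>(LINT x:K d|lebd d. f x) - f (origin d)\<bar>) \<le> ereal (B d * enn2real (Iq d 2 (K d)))"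
    by eventually_elim
      (auto intro!: SUP_least test_class_set_integral_deviation_le[OF meas vol com star B])
  show "\<forall>\<^sub>F d in sequentially. 0 \<le> (SUP f \<in> test_class d (K d) (B d).
      ereal \<bar>(LINT x:K d|lebd d. f x) - f (origin d)\<bar>)"
    by (intro always_eventually allI order_trans[OF _ SUP_upper[OF zero_in_test_class[OF B]]])
      simp
qed

end
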